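(* Let $0<R_\oplus<R_{\mathrm{LEO}}<R_{\mathrm{GEO}}$. Let $N_{\mathrm{LEO}}\ge1$ LEO satellites be i.i.d. uniform on the sphere of radius $R_{\mathrm{LEO}}$, let the IoT device be at $(R_\oplus,0,0)$ and the GEO satellite at $(R_{\mathrm{GEO}},\Theta,0)$ with $\Theta\in(0,\pi)$. The relay is the LEO satellite nearest to the IoT device; let $\theta_{\mathrm{IL}}$ be its central angle to the IoT device and $l_{\mathrm{LG}}$ its distance to the GEO satellite. Let $l_{\mathrm{IL}}^{\max}\in[R_{\mathrm{LEO}}-R_\oplus,\sqrt{R_{\mathrm{LEO}}^2-R_\oplus^2}]$, $l_{\mathrm{LG}}^{\max}>0$, and $\theta_{\mathrm{IL}}^{\max}=\arccos\left(\frac{R_{\mathrm{LEO}}^2+R_\oplus^2-(l_{\mathrm{IL}}^{\max})^2}{2R_{\mathrm{LEO}}R_\oplus}\right)$. Then the satellite availability probability $P^A=\mathbb P[\theta_{\mathrm{IL}}\le\theta_{\mathrm{IL}}^{\max},\ l_{\mathrm{LG}}\le l_{\mathrm{LG}}^{\max}]$ equals $$P^A=\int_0^{\theta_{\mathrm{IL}}^{\max}} f_{\theta_{\mathrm{IL}}}(\theta)\,P_{\mathrm{LG}}^A(\theta)\,d\theta,\qquad f_{\theta_{\mathrm{IL}}}(\theta)=\frac{N_{\mathrm{LEO}}\sin\theta}{2}\left(\frac{1+\cos\theta}{2}\right)^{N_{\mathrm{LEO}}-1},$$ where $P_{\mathrm{LG}}^A(\theta)=\mathbb P[l_{\mathrm{LG}}\le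 l_{\mathrm{LG}}^{\max}\mid\theta_{\mathrm{IL}}=\theta]$ is given, for $\theta\in(0,\pi)$, with $d_1(\theta)=\sqrt{R_{\mathrm{LEO}}^2+R_{\mathrm{GEO}}^2-2R_{\mathrm{LEO}}R_{\mathrm{GEO}}\cos(\theta-\Theta)}$ and $d_2(\theta)=\sqrt{R_{\mathrm{LEO}}^2+R_{\mathrm{GEO}}^2-2R_{\mathrm{LEO}}R_{\mathrm{GEO}}\cos(\theta+\Theta)}$, by $$P_{\mathrm{LG}}^A(\theta)=\begin{cases}0,& d_1(\theta)>l_{\mathrm{LG}}^{\max},\\ 1,& d_2(\theta)<l_{\mathrm{LG}}^{\max},\\ \frac1\pi\arccos\left(\frac{R_{\mathrm{LEO}}^2+R_{\mathrm{GEO}}^2-(l_{\mathrm{LG}}^{\max})^2}{2R_{\mathrm{LEO}}R_{\mathrm{GEO}}\sin\theta\sin\Theta}-\frac{\cos\theta\cos\Theta}{\sin\theta\sin\Theta}\right),&\text{otherwise.}\end{cases}$$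
   Context: Spherical coordinates $(r,\theta,\varphi)$ with origin at the Earth's center, $\theta$ polar angle, $\varphi$ azimuth. The central angle between two points is the angle at the origin between the rays to them. The relay (nearest LEO satellite) is the one with the smallest central angle to the IoT device; conditionally on its polar angle $\theta$, its azimuth is uniform. The distance between $(R_1,\theta_1,\varphi_1)$ and $(R_2,\theta_2,\varphi_2)$ is $\sqrt{R_1^2+R_2^2-2R_1R_2(\sin\theta_1\sin\theta_2\cos(\varphi_1-\varphi_2)+\cos\theta_1\cos\theta_2)}$. *)

theory Defs
  imports "HOL-Probability.Probability"
begin

text \<open>A point on a sphere of fixed radius is described by its spherical angles
  (polar angle, azimuth).  The uniform (normalised surface area) distribution on a
  sphere, in these coordinates, is the normalised area element
  sin theta dtheta dphi / (4 pi) on [0,pi] x [0,2pi).\<close>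

definition sphere_uniform :: "(real \<times> real) measure" where
  "sphere_uniform = density lborel
     (\<lambda>(\<theta>, \<phi>). indicator ({0..pi} \<times> {0..<2*pi}) (\<theta>, \<phi>) * ennreal (sin \<theta> / (4*pi)))"

definition leo_sats :: "nat \<Rightarrow> (nat \<Rightarrow> real \<times> real) measure" where
  "leo_sats N = PiM {..<N} (\<lambda>_. sphere_uniform)"

definition central_angle :: "real \<times> real \<Rightarrow> real \<times> real \<Rightarrow> real" where
  "central_angle p q = arccos (sin (fst p) * sin (fst q) * cos (snd p - snd q)
                               + cos (fst p) * cos (fst q))"

definition sph_dist :: "real \<Rightarrow> real \<times> real \<Rightarrow> real \<Rightarrow> real \<times> real \<Rightarrow> real" where
  "sph_dist R1 p R2 q = sqrt (R1\<^sup>2 + R2\<^sup>2 - 2 * R1 * R2 *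
      (sin (fst p) * sin (fst q) * cos (snd p - snd q) + cos (fst p) * cos (fst q)))"

text \<open>Index of the relay: the LEO satellite with smallest central angle to the IoT device,
  which sits at angles (0,0). Ties (a null event) are broken by smallest index.\<close>
definition relay :: "nat \<Rightarrow> (nat \<Rightarrow> real \<times> real) \<Rightarrow> nat" where
  "relay N \<omega> = (LEAST i. i < N \<and> (\<forall>j<N. central_angle (0,0) (\<omega> i) \<le> central_angle (0,0) (\<omega> j)))"

definition f_theta_IL :: "nat \<Rightarrow> real \<Rightarrow> real" where
  "f_theta_IL N \<theta> = real N * sin \<theta> / 2 * ((1 + cos \<theta>) / 2) ^ (N - 1)"

definition P_LG :: "real \<Rightarrow> real \<Rightarrow> real \<Rightarrow> real \<Rightarrow> real \<Rightarrow> real" where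
  "P_LG RL RG \<Theta> lmax \<theta> =
     (let d1 = sqrt (RL\<^sup>2 + RG\<^sup>2 - 2 * RL * RG * cos (\<theta> - \<Theta>));
          d2 = sqrt (RL\<^sup>2 + RG\<^sup>2 - 2 * RL * RG * cos (\<theta> + \<Theta>))
      in if d1 > lmax then 0
         else if d2 < lmax then 1
         else arccos ((RL\<^sup>2 + RG\<^sup>2 - lmax\<^sup>2) / (2 * RL * RG * sin \<theta> * sin \<Theta>)
                      - cos \<theta> * cos \<Theta> / (sin \<theta> * sin \<Theta>)) / pi)"

end

theory Submission
  imports Defs
begin

text \<open>Write \<open>\<alpha>(y)\<close> for the central angle between a satellite at angles \<open>y\<close> and the IoT
  device.  Under the uniform law \<open>\<alpha>\<close> has tail \<open>P[\<alpha> \<ge> t] = (1 + cos t)/2\<close>, and it has no atoms,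
  so the event "satellite \<open>i\<close> is the relay and lies in \<open>B\<close>" has probability
  \<open>\<integral>\<^sub>B ((1 + cos \<alpha>)/2)^(N-1)\<close>; summing over \<open>i\<close> gives \<open>N\<close> times this.  For the availability set
  \<open>B\<close> one integrates first over the azimuth: for fixed polar angle \<open>\<theta>\<close> the condition
  \<open>l\<^sub>L\<^sub>G \<le> l\<^sub>L\<^sub>G\<^sup>m\<^sup>a\<^sup>x\<close> is equivalent to \<open>cos \<phi> \<ge> c(\<theta>)\<close>, whose solution set in \<open>[0, 2\<pi>)\<close> has
  measure \<open>2 arccos c(\<theta>)\<close> (or \<open>0\<close>, \<open>2\<pi>\<close> when \<open>c(\<theta>)\<close> leaves \<open>[-1,1]\<close>), i.e. \<open>2\<pi> P\<^sub>L\<^sub>G(\<theta>)\<close>.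
  The remaining integral over \<open>\<theta>\<close> has density \<open>N sin \<theta>/2 \<cdot> ((1 + cos \<theta>)/2)^(N-1)\<close>.\<close>

section \<open>The uniform distribution on the sphere\<close>

lemma sets_sphere_uniform [simp, measurable_cong]: "sets sphere_uniform = sets borel"
  by (simp add: sphere_uniform_def)

lemma sets_sphere_uniform_pair [measurable_cong]:
  "sets sphere_uniform = sets (borel \<Otimes>\<^sub>M borel)"
  by (subst borel_prod) simp

lemma space_sphere_uniform [simp]: "space sphere_uniform = UNIV"
  by (simp add: sphere_uniform_def)

lemma nn_integral_sphere_uniform:
  assumes [measurable]: "f \<in> borel_measurable (borel \<Otimes>\<^sub>M borel)"
  shows "(\<integral>\<^sup>+y. f y \<partial>sphere_uniform) =
    (\<integral>\<^sup>+\<theta>. \<integral>\<^sup>+\<phi>. indicator ({0..pi} \<times> {0..<2*pi}) (\<theta>, \<phi>) * ennreal (sin \<theta> / (4*pi)) * f (\<theta>, \<phi>)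
       \<partial>lborel \<partial>lborel)"
proof -
  let ?d = "\<lambda>(\<theta>, \<phi>). indicator ({0..pi} \<times> {0..<2*pi}) (\<theta>, \<phi>) * ennreal (sin \<theta> / (4*pi))"
  have d_meas [measurable]: "?d \<in> borel_measurable (borel \<Otimes>\<^sub>M borel)"
    by measurable
  have "(\<integral>\<^sup>+y. f y \<partial>sphere_uniform) = (\<integral>\<^sup>+y. ?d y * f y \<partial>lborel)"
    unfolding sphere_uniform_def using assms d_meas
    by (subst nn_integral_density) (auto simp: borel_prod)
  also have "\<dots> = (\<integral>\<^sup>+y. ?d y * f y \<partial>(lborel \<Otimes>\<^sub>M lborel))"
    by (simp add: lborel_prod)
  also have "\<dots> = (\<integral>\<^sup>+\<theta>. \<integral>\<^sup>+\<phi>. ?d (\<theta>, \<phi>) * f (\<theta>, \<phi>) \<partial>lborel \<partial>lborel)"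
    using assms d_meas by (subst lborel.nn_integral_fst[symmetric]) (auto simp: lborel_prod borel_prod)
  finally show ?thesis
    by simp
qed

lemma nn_integral_sphere_uniform_polar:
  assumes [measurable]: "g \<in> borel_measurable borel"
  shows "(\<integral>\<^sup>+y. g (fst y) \<partial>sphere_uniform) =
    (\<integral>\<^sup>+\<theta>. indicator {0..pi} \<theta> * ennreal (sin \<theta> / 2) * g \<theta> \<partial>lborel)"
proof -
  have "(\<integral>\<^sup>+\<phi>. indicator ({0..pi} \<times> {0..<2*pi}) (\<theta>, \<phi>) * ennreal (sin \<theta> / (4*pi)) * g \<theta> \<partial>lborel)
      = indicator {0..pi} \<theta> * ennreal (sin \<theta> / 2) * g \<theta>" for \<theta> :: real
  proof -
    have "(\<integral>\<^sup>+\<phi>. indicator ({0..pi} \<times> {0..<2*pi}) (\<theta>, \<phi>) * ennreal (sin \<theta> / (4*pi)) * g \<theta> \<partial>lborel)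
        = (\<integral>\<^sup>+\<phi>. (indicator {0..pi} \<theta> * ennreal (sin \<theta> / (4*pi)) * g \<theta>) * indicator {0..<2*pi} \<phi> \<partial>lborel)"
      by (intro nn_integral_cong) (simp add: indicator_times mult_ac)
    also have "\<dots> = indicator {0..pi} \<theta> * ennreal (sin \<theta> / (4*pi)) * g \<theta> * ennreal (2*pi)"
      by (simp add: nn_integral_cmult_indicator)
    also have "\<dots> = indicator {0..pi} \<theta> * ennreal (sin \<theta> / 2) * g \<theta>"
    proof (cases "\<theta> \<in> {0..pi}")
      case True
      then have "ennreal (sin \<theta> / (4*pi)) * ennreal (2*pi) = ennreal (sin \<theta> / 2)"
        by (subst ennreal_mult[symmetric]) (auto intro: sin_ge_zero simp: field_simps)
      then show ?thesis
        by (simp add: mult_ac)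
    qed simp
    finally show ?thesis .
  qed
  then show ?thesis
    by (simp add: nn_integral_sphere_uniform)
qed

lemma emeasure_sphere_uniform_polar:
  assumes [measurable]: "S \<in> sets borel"
  shows "emeasure sphere_uniform {y. fst y \<in> S} =
    (\<integral>\<^sup>+\<theta>. ennreal (sin \<theta> / 2) * indicator ({0..pi} \<inter> S) \<theta> \<partial>lborel)"
proof -
  have "{y::real \<times> real. fst y \<in> S} = fst -` S \<inter> space (borel \<Otimes>\<^sub>M borel)"
    by (auto simp: space_pair_measure)
  also have "\<dots> \<in> sets (borel \<Otimes>\<^sub>M borel)"
    by measurable
  finally have "{y::real \<times> real. fst y \<in> S} \<in> sets borel"
    by (simp only: borel_prod)
  then have "emeasure sphere_uniform {y. fst y \<in> S} = (\<integral>\<^sup>+y. indicator {y. fst y \<in> S} y \<partial>sphere_uniform)"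
    by (intro nn_integral_indicator[symmetric]) simp
  also have "\<dots> = (\<integral>\<^sup>+y. indicator S (fst y) \<partial>sphere_uniform)"
    by (intro nn_integral_cong) (simp add: indicator_def)
  also have "\<dots> = (\<integral>\<^sup>+\<theta>. ennreal (sin \<theta> / 2) * indicator ({0..pi} \<inter> S) \<theta> \<partial>lborel)"
    by (subst nn_integral_sphere_uniform_polar) (auto intro!: nn_integral_cong simp: indicator_def)
  finally show ?thesis .
qed

lemma nn_integral_half_sin:
  assumes "0 \<le> t" "t \<le> pi"
  shows "(\<integral>\<^sup>+\<theta>. ennreal (sin \<theta> / 2) * indicator {t..pi} \<theta> \<partial>lborel) = ennreal ((1 + cos t) / 2)"
proof -
  have "(\<integral>\<^sup>+\<theta>. ennreal (sin \<theta> / 2) * indicator {t..pi} \<theta> \<partial>lborel) = ennreal (- cos pi / 2 - (- cos t / 2))"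
    using assms by (intro nn_integral_FTC_Icc) (auto intro!: derivative_eq_intros sin_ge_zero)
  then show ?thesis
    by (simp add: field_simps)
qed

lemma prob_space_sphere_uniform: "prob_space sphere_uniform"
proof
  have "emeasure sphere_uniform (space sphere_uniform) = emeasure sphere_uniform {y. fst y \<in> UNIV}"
    by simp
  also have "\<dots> = (\<integral>\<^sup>+\<theta>. ennreal (sin \<theta> / 2) * indicator {0..pi} \<theta> \<partial>lborel)"
    by (subst emeasure_sphere_uniform_polar) auto
  also have "\<dots> = 1"
    by (subst nn_integral_half_sin) auto
  finally show "emeasure sphere_uniform (space sphere_uniform) = 1" .
qed

interpretation sphere_uniform: prob_space sphere_uniform
  by (rule prob_space_sphere_uniform)

interpretation sphere_uniform_product: product_sigma_finite "\<lambda>_::nat. sphere_uniform"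
  by (simp add: product_sigma_finite_def sphere_uniform.sigma_finite_measure_axioms)

lemma arccos_eq_arccos_2: "\<bar>y\<bar> > 1 \<Longrightarrow> arccos y = arccos 2"
proof -
  assume y: "\<bar>y\<bar> > 1"
  have "cos x \<noteq> y" "cos x \<noteq> 2" for x :: real
    using abs_cos_le_one[of x] cos_le_one[of x] y by linarith+
  then have "(\<lambda>x. 0 \<le> x \<and> x \<le> pi \<and> cos x = y) = (\<lambda>x. 0 \<le> x \<and> x \<le> pi \<and> cos x = 2)"
    by auto
  then show ?thesis
    unfolding arccos_def by simp
qed

lemma borel_measurable_arccos [measurable (raw)]:
  assumes "f \<in> borel_measurable M"
  shows "(\<lambda>x. arccos (f x)) \<in> borel_measurable M"
proof -
  have "arccos = (\<lambda>y. if y \<in> {-1..1} then arccos y else arccos 2)"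
  proof
    fix y :: real
    show "arccos y = (if y \<in> {-1..1} then arccos y else arccos 2)"
      using arccos_eq_arccos_2[of y] by (cases "y \<in> {-1..1}") auto
  qed
  also have "\<dots> \<in> borel_measurable borel"
    by (intro borel_measurable_continuous_on_if continuous_on_arccos' continuous_on_const) auto
  finally show ?thesis
    using measurable_comp[OF assms] by (simp add: comp_def)
qed

definition pole_angle :: "real \<times> real \<Rightarrow> real" where
  "pole_angle y = arccos (cos (fst y))"

lemma central_angle_pole: "central_angle (0,0) y = pole_angle y"
  by (simp add: central_angle_def pole_angle_def)

lemma pole_angle_bounds: "0 \<le> pole_angle y" "pole_angle y \<le> pi"
  unfolding pole_angle_def by (simp_all add: arccos_lbound arccos_ubound)

lemma pole_angle_eq: "fst y \<in> {0..pi} \<Longrightarrow> pole_angle y = fst y"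
  by (simp add: pole_angle_def arccos_cos)

lemma borel_measurable_pole_angle [measurable]:
  "pole_angle \<in> borel_measurable (borel \<Otimes>\<^sub>M borel)"
  unfolding pole_angle_def by measurable

lemma half_one_plus_cos_bounds:
  fixes t :: real
  shows "0 \<le> (1 + cos t) / 2" "(1 + cos t) / 2 \<le> 1"
  using cos_ge_minus_one[of t] cos_le_one[of t] by (simp_all only: field_simps)

lemma emeasure_pole_angle_ge:
  assumes "0 \<le> t" "t \<le> pi"
  shows "emeasure sphere_uniform {y. t \<le> pole_angle y} = ennreal ((1 + cos t) / 2)"
proof -
  have "{y. t \<le> pole_angle y} = {y. fst y \<in> {\<theta>. t \<le> arccos (cos \<theta>)}}"
    by (simp add: pole_angle_def)
  also have "emeasure sphere_uniform \<dots> = (\<integral>\<^sup>+\<theta>. ennreal (sin \<theta> / 2) * indicator {t..pi} \<theta> \<partial>lborel)"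
    using assms by (subst emeasure_sphere_uniform_polar)
      (auto intro!: nn_integral_cong simp: indicator_def arccos_cos)
  finally show ?thesis
    using nn_integral_half_sin[OF assms] by simp
qed

text \<open>The strict version differs by the null set \<open>{\<theta> = t}\<close>: the law of \<open>\<alpha>\<close> has no atoms.\<close>

lemma emeasure_pole_angle_gt:
  assumes "0 \<le> t" "t \<le> pi"
  shows "emeasure sphere_uniform {y. t < pole_angle y} = ennreal ((1 + cos t) / 2)"
proof -
  have "{y. t < pole_angle y} = {y. fst y \<in> {\<theta>. t < arccos (cos \<theta>)}}"
    by (simp add: pole_angle_def)
  also have "emeasure sphere_uniform \<dots> = (\<integral>\<^sup>+\<theta>. ennreal (sin \<theta> / 2) * indicator {t..pi} \<theta> \<partial>lborel)"
    using assms by (subst emeasure_sphere_uniform_polar)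
      (auto intro!: nn_integral_cong_AE eventually_mono[OF AE_lborel_singleton[of t]]
        simp: indicator_def arccos_cos)
  finally show ?thesis
    using nn_integral_half_sin[OF assms] by simp
qed

lemma sets_pole_angle:
  "{y. t < pole_angle y} \<in> sets sphere_uniform" "{y. t \<le> pole_angle y} \<in> sets sphere_uniform"
proof -
  have "{y \<in> space (borel \<Otimes>\<^sub>M borel). t < pole_angle y} \<in> sets (borel \<Otimes>\<^sub>M borel)"
       "{y \<in> space (borel \<Otimes>\<^sub>M borel). t \<le> pole_angle y} \<in> sets (borel \<Otimes>\<^sub>M borel)"
    by measurable
  then have "{y. t < pole_angle y} \<in> sets (borel \<Otimes>\<^sub>M borel)" "{y. t \<le> pole_angle y} \<in> sets (borel \<Otimes>\<^sub>M borel)"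
    by (simp_all add: space_pair_measure)
  then show "{y. t < pole_angle y} \<in> sets sphere_uniform" "{y. t \<le> pole_angle y} \<in> sets sphere_uniform"
    by (simp_all only: sets_sphere_uniform_pair)
qed

section \<open>The azimuthal condition\<close>

lemma cos_ge_set_eq:
  fixes c :: real
  assumes "-1 < c" "c \<le> 1"
  shows "{\<phi>\<in>{0..<2*pi}. c \<le> cos \<phi>} = {0..arccos c} \<union> {2*pi - arccos c..<2*pi}"
proof -
  define \<alpha> where "\<alpha> = arccos c"
  have \<alpha>: "0 \<le> \<alpha>" "\<alpha> < pi" "cos \<alpha> = c"
    using assms arccos_lt_bounded[of c] arccos_lbound[of c] unfolding \<alpha>_def
    by (cases "c = 1"; simp)+
  have cos_reflect: "cos (2*pi - \<phi>) = cos \<phi>" for \<phi>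
    by (simp add: cos_diff)
  have key: "c \<le> cos \<phi> \<longleftrightarrow> \<phi> \<le> \<alpha> \<or> 2*pi - \<alpha> \<le> \<phi>" if "0 \<le> \<phi>" "\<phi> < 2*pi" for \<phi>
  proof (cases "\<phi> \<le> pi")
    case True
    then have "cos \<alpha> \<le> cos \<phi> \<longleftrightarrow> \<phi> \<le> \<alpha>"
      using that \<alpha> by (intro cos_mono_le_eq) auto
    then show ?thesis
      using True \<alpha> by auto
  next
    case False
    then have "cos \<alpha> \<le> cos (2*pi - \<phi>) \<longleftrightarrow> 2*pi - \<phi> \<le> \<alpha>"
      using that \<alpha> by (intro cos_mono_le_eq) auto
    then show ?thesis
      using False \<alpha> cos_reflect[of \<phi>] by auto
  qed
  show ?thesis
  proof (intro set_eqI)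
    fix \<phi>
    show "\<phi> \<in> {\<phi>\<in>{0..<2*pi}. c \<le> cos \<phi>} \<longleftrightarrow> \<phi> \<in> {0..arccos c} \<union> {2*pi - arccos c..<2*pi}"
      using key[of \<phi>] \<alpha> unfolding \<alpha>_def[symmetric] by auto
  qed
qed

lemma emeasure_cos_ge:
  fixes c :: real
  shows "emeasure lborel {\<phi>\<in>{0..<2*pi}. c \<le> cos \<phi>} =
    ennreal (if c > 1 then 0 else if c < -1 then 2*pi else 2 * arccos c)"
proof -
  consider "c > 1" | "c \<le> -1" | "-1 < c" "c \<le> 1"
    by linarith
  then show ?thesis
  proof cases
    case 1
    then have "\<not> c \<le> cos \<phi>" for \<phi>
      using cos_le_one[of \<phi>] by linarith
    then have "{\<phi>\<in>{0..<2*pi}. c \<le> cos \<phi>} = {}"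
      by blast
    then show ?thesis
      using 1 by (simp only:) simp
  next
    case 2
    then have "c \<le> cos \<phi>" for \<phi>
      using cos_ge_minus_one[of \<phi>] by linarith
    then have "{\<phi>\<in>{0..<2*pi}. c \<le> cos \<phi>} = {0..<2*pi}"
      by auto
    moreover have "c = -1 \<Longrightarrow> arccos c = pi"
      by simp
    ultimately show ?thesis
      using 2 by auto
  next
    case 3
    define \<alpha> where "\<alpha> = arccos c"
    have \<alpha>: "0 \<le> \<alpha>" "\<alpha> < pi"
      using 3 arccos_lt_bounded[of c] arccos_lbound[of c] unfolding \<alpha>_def
      by (cases "c = 1"; simp)+
    have "emeasure lborel ({0..\<alpha>} \<union> {2*pi - \<alpha>..<2*pi})
        = emeasure lborel {0..\<alpha>} + emeasure lborel {2*pi - \<alpha>..<2*pi}"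
      using \<alpha> by (intro plus_emeasure[symmetric]) auto
    also have "\<dots> = ennreal (2 * \<alpha>)"
      using \<alpha> by (simp add: ennreal_plus[symmetric] del: ennreal_plus)
    finally show ?thesis
      using 3 cos_ge_set_eq[OF 3] unfolding \<alpha>_def by simp
  qed
qed

lemma sqrt_le_iff_le_power2: "0 \<le> l \<Longrightarrow> sqrt x \<le> l \<longleftrightarrow> x \<le> l\<^sup>2"
  by (metis real_sqrt_abs abs_of_nonneg real_sqrt_le_iff)

lemma sqrt_less_iff_less_power2: "0 \<le> l \<Longrightarrow> sqrt x < l \<longleftrightarrow> x < l\<^sup>2"
  by (metis real_sqrt_abs abs_of_nonneg real_sqrt_less_iff)

text \<open>For fixed polar angle \<open>\<theta>\<close> of the relay, \<open>l\<^sub>L\<^sub>G \<le> l\<close> is a threshold condition \<open>c \<le> cos \<phi>\<close>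
  on the azimuth, and the three cases of \<^const>\<open>P_LG\<close> are \<open>c > 1\<close>, \<open>c < -1\<close> and \<open>c \<in> [-1,1]\<close>.\<close>

lemma P_LG_azimuth_threshold:
  assumes "0 < RL" "RL < RG" "0 < \<Theta>" "\<Theta> < pi" "0 < l" "0 < \<theta>" "\<theta> < pi"
  obtains c where "P_LG RL RG \<Theta> l \<theta> = (if c > 1 then 0 else if c < -1 then 1 else arccos c / pi)"
    and "\<And>\<phi>. sph_dist RL (\<theta>, \<phi>) RG (\<Theta>, 0) \<le> l \<longleftrightarrow> c \<le> cos \<phi>"
proof
  have "sin \<theta> > 0" "sin \<Theta> > 0"
    using assms by (auto intro: sin_gt_zero)
  define D where "D = 2 * RL * RG * sin \<theta> * sin \<Theta>"
  have D_pos: "D > 0"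
    unfolding D_def using assms \<open>sin \<theta> > 0\<close> \<open>sin \<Theta> > 0\<close> by simp
  define c where "c = (RL\<^sup>2 + RG\<^sup>2 - l\<^sup>2) / (2 * RL * RG * sin \<theta> * sin \<Theta>)
                      - cos \<theta> * cos \<Theta> / (sin \<theta> * sin \<Theta>)"
  define K where "K = RL\<^sup>2 + RG\<^sup>2 - l\<^sup>2 - 2 * RL * RG * cos \<theta> * cos \<Theta>"
  have cD: "c * D = K"
    unfolding c_def D_def K_def using assms \<open>sin \<theta> > 0\<close> \<open>sin \<Theta> > 0\<close>
    by (simp add: field_simps power2_eq_square)
  show "sph_dist RL (\<theta>, \<phi>) RG (\<Theta>, 0) \<le> l \<longleftrightarrow> c \<le> cos \<phi>" for \<phi>
  proof -
    have "sph_dist RL (\<theta>, \<phi>) RG (\<Theta>, 0) \<le> l \<longleftrightarrow>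
        RL\<^sup>2 + RG\<^sup>2 - 2*RL*RG*(sin \<theta> * sin \<Theta> * cos \<phi> + cos \<theta> * cos \<Theta>) \<le> l\<^sup>2"
      unfolding sph_dist_def using assms by (simp add: sqrt_le_iff_le_power2)
    also have "\<dots> \<longleftrightarrow> K \<le> cos \<phi> * D"
      unfolding K_def D_def by (auto simp: algebra_simps)
    finally show ?thesis
      using D_pos by (simp add: cD[symmetric])
  qed
  have d1: "sqrt (RL\<^sup>2 + RG\<^sup>2 - 2 * RL * RG * cos (\<theta> - \<Theta>)) > l \<longleftrightarrow> c > 1"
  proof -
    have "sqrt (RL\<^sup>2 + RG\<^sup>2 - 2 * RL * RG * cos (\<theta> - \<Theta>)) > l \<longleftrightarrow>
          \<not> (RL\<^sup>2 + RG\<^sup>2 - 2 * RL * RG * cos (\<theta> - \<Theta>) \<le> l\<^sup>2)"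
      using assms by (simp add: sqrt_le_iff_le_power2[symmetric] not_le)
    also have "\<dots> \<longleftrightarrow> \<not> K \<le> D"
      unfolding K_def D_def cos_diff by (auto simp: algebra_simps)
    finally show ?thesis
      using D_pos by (simp add: cD[symmetric] not_le)
  qed
  have d2: "sqrt (RL\<^sup>2 + RG\<^sup>2 - 2 * RL * RG * cos (\<theta> + \<Theta>)) < l \<longleftrightarrow> c < -1"
  proof -
    have "sqrt (RL\<^sup>2 + RG\<^sup>2 - 2 * RL * RG * cos (\<theta> + \<Theta>)) < l \<longleftrightarrow>
          RL\<^sup>2 + RG\<^sup>2 - 2 * RL * RG * cos (\<theta> + \<Theta>) < l\<^sup>2"
      using assms by (simp add: sqrt_less_iff_less_power2)
    also have "\<dots> \<longleftrightarrow> K < - D"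
      unfolding K_def D_def cos_add by (auto simp: algebra_simps)
    also have "\<dots> \<longleftrightarrow> c * D < (-1) * D"
      by (simp add: cD)
    also have "\<dots> \<longleftrightarrow> c < -1"
      using D_pos by (simp only: mult_less_cancel_right) auto
    finally show ?thesis .
  qed
  show "P_LG RL RG \<Theta> l \<theta> = (if c > 1 then 0 else if c < -1 then 1 else arccos c / pi)"
    unfolding P_LG_def Let_def d1 d2 c_def by simp
qed

lemma emeasure_azimuths_within_range:
  assumes "0 < RL" "RL < RG" "0 < \<Theta>" "\<Theta> < pi" "0 < l" "0 < \<theta>" "\<theta> < pi"
  shows "emeasure lborel {\<phi>\<in>{0..<2*pi}. sph_dist RL (\<theta>, \<phi>) RG (\<Theta>, 0) \<le> l}
      = ennreal (2*pi * P_LG RL RG \<Theta> l \<theta>)"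
proof -
  obtain c where P: "P_LG RL RG \<Theta> l \<theta> = (if c > 1 then 0 else if c < -1 then 1 else arccos c / pi)"
    and iff: "\<And>\<phi>. sph_dist RL (\<theta>, \<phi>) RG (\<Theta>, 0) \<le> l \<longleftrightarrow> c \<le> cos \<phi>"
    using P_LG_azimuth_threshold[OF assms] by blast
  show ?thesis
    unfolding iff P using emeasure_cos_ge[of c] by auto
qed

lemma P_LG_bounds:
  assumes "0 < RL" "RL < RG" "0 < \<Theta>" "\<Theta> < pi" "0 < l" "0 < \<theta>" "\<theta> < pi"
  shows "0 \<le> P_LG RL RG \<Theta> l \<theta>" "P_LG RL RG \<Theta> l \<theta> \<le> 1"
proof -
  obtain c where P: "P_LG RL RG \<Theta> l \<theta> = (if c > 1 then 0 else if c < -1 then 1 else arccos c / pi)"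
    using P_LG_azimuth_threshold[OF assms] by blast
  show "0 \<le> P_LG RL RG \<Theta> l \<theta>" "P_LG RL RG \<Theta> l \<theta> \<le> 1"
    unfolding P using arccos_lbound[of c] arccos_ubound[of c] by auto
qed

section \<open>The relay\<close>

lemma relay_nearest:
  assumes "N \<ge> 1"
  shows "relay N \<omega> < N" "\<And>j. j < N \<Longrightarrow> pole_angle (\<omega> (relay N \<omega>)) \<le> pole_angle (\<omega> j)"
proof -
  have "Min ((\<lambda>j. pole_angle (\<omega> j)) ` {..<N}) \<in> (\<lambda>j. pole_angle (\<omega> j)) ` {..<N}"
    using assms by (intro Min_in) (auto simp: lessThan_empty_iff)
  then obtain m where "m < N" "Min ((\<lambda>j. pole_angle (\<omega> j)) ` {..<N}) = pole_angle (\<omega> m)"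
    by auto
  then have "m < N \<and> (\<forall>j<N. pole_angle (\<omega> m) \<le> pole_angle (\<omega> j))"
    by (metis Min_le finite_imageI finite_lessThan image_eqI lessThan_iff)
  then have "relay N \<omega> < N \<and> (\<forall>j<N. pole_angle (\<omega> (relay N \<omega>)) \<le> pole_angle (\<omega> j))"
    unfolding relay_def central_angle_pole by (rule LeastI)
  then show "relay N \<omega> < N" "\<And>j. j < N \<Longrightarrow> pole_angle (\<omega> (relay N \<omega>)) \<le> pole_angle (\<omega> j)"
    by auto
qed

lemma relay_eq_iff:
  assumes "N \<ge> 1"
  shows "relay N \<omega> = i \<longleftrightarrow> i < N \<and> (\<forall>j<N. pole_angle (\<omega> i) \<le> pole_angle (\<omega> j))
           \<and> (\<forall>j<i. pole_angle (\<omega> i) < pole_angle (\<omega> j))"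
proof
  assume relay: "relay N \<omega> = i"
  have "pole_angle (\<omega> i) < pole_angle (\<omega> j)" if "j < i" for j
  proof -
    have "j < N"
      using that relay relay_nearest(1)[OF assms, of \<omega>] by simp
    moreover have "\<not> (j < N \<and> (\<forall>k<N. pole_angle (\<omega> j) \<le> pole_angle (\<omega> k)))"
      using not_less_Least[of j] that relay unfolding relay_def central_angle_pole by blast
    ultimately obtain k where "k < N" "pole_angle (\<omega> k) < pole_angle (\<omega> j)"
      by (auto simp: not_le)
    then show ?thesis
      using relay relay_nearest(2)[OF assms, where \<omega>=\<omega> and j=k] by simp
  qed
  then show "i < N \<and> (\<forall>j<N. pole_angle (\<omega> i) \<le> pole_angle (\<omega> j))
      \<and> (\<forall>j<i. pole_angle (\<omega> i) < pole_angle (\<omega> j))"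
    using relay relay_nearest(1)[OF assms, of \<omega>] relay_nearest(2)[OF assms, where \<omega>=\<omega>] by auto
next
  assume i: "i < N \<and> (\<forall>j<N. pole_angle (\<omega> i) \<le> pole_angle (\<omega> j))
      \<and> (\<forall>j<i. pole_angle (\<omega> i) < pole_angle (\<omega> j))"
  show "relay N \<omega> = i"
    unfolding relay_def central_angle_pole
  proof (rule Least_equality)
    fix j
    assume "j < N \<and> (\<forall>k<N. pole_angle (\<omega> j) \<le> pole_angle (\<omega> k))"
    then show "i \<le> j"
      using i by (meson leD leI)
  qed (use i in auto)
qed

lemma measurable_leo_sats_component:
  "j < N \<Longrightarrow> (\<lambda>\<omega>. \<omega> j) \<in> measurable (leo_sats N) sphere_uniform"
  unfolding leo_sats_def by (intro measurable_component_singleton) auto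

lemma borel_measurable_leo_sats_pole_angle:
  assumes "j < N"
  shows "(\<lambda>\<omega>. pole_angle (\<omega> j)) \<in> borel_measurable (leo_sats N)"
proof -
  have "pole_angle \<in> borel_measurable sphere_uniform"
    by (subst measurable_cong_sets[OF sets_sphere_uniform_pair refl]) (rule borel_measurable_pole_angle)
  then show ?thesis
    using measurable_compose[OF measurable_leo_sats_component[OF assms]] by blast
qed

lemma sets_relay_eq:
  assumes B: "B \<in> sets (borel \<Otimes>\<^sub>M borel)" and N: "N \<ge> 1"
  shows "{\<omega> \<in> space (leo_sats N). relay N \<omega> = i \<and> \<omega> i \<in> B} \<in> sets (leo_sats N)"
proof (cases "i < N")
  case True
  note angle = borel_measurable_leo_sats_pole_angle
  have nearest: "Measurable.pred (leo_sats N) (\<lambda>\<omega>. \<forall>j\<in>{..<N}. pole_angle (\<omega> i) \<le> pole_angle (\<omega> j))"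
  proof (rule pred_intros_finite)
    fix j
    assume "j \<in> {..<N}"
    then show "Measurable.pred (leo_sats N) (\<lambda>\<omega>. pole_angle (\<omega> i) \<le> pole_angle (\<omega> j))"
      using borel_measurable_le[OF angle[OF True] angle[of j]] by (simp add: Measurable.pred_def)
  qed simp
  have strictly_before: "Measurable.pred (leo_sats N) (\<lambda>\<omega>. \<forall>j\<in>{..<i}. pole_angle (\<omega> i) < pole_angle (\<omega> j))"
    using True angle by (intro pred_intros_finite borel_measurable_pred_less) auto
  have in_B: "Measurable.pred (leo_sats N) (\<lambda>\<omega>. \<omega> i \<in> B)"
  proof -
    have "(\<lambda>\<omega>. \<omega> i) -` B \<inter> space (leo_sats N) \<in> sets (leo_sats N)"
      using B by (intro measurable_sets[OF measurable_leo_sats_component[OF True]]) (simp only: sets_sphere_uniform_pair)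
    moreover have "{\<omega> \<in> space (leo_sats N). \<omega> i \<in> B} = (\<lambda>\<omega>. \<omega> i) -` B \<inter> space (leo_sats N)"
      by auto
    ultimately show ?thesis
      unfolding Measurable.pred_def by simp
  qed
  have "{\<omega> \<in> space (leo_sats N). relay N \<omega> = i \<and> \<omega> i \<in> B} =
      {\<omega> \<in> space (leo_sats N). \<omega> i \<in> B \<and> (\<forall>j\<in>{..<N}. pole_angle (\<omega> i) \<le> pole_angle (\<omega> j))
         \<and> (\<forall>j\<in>{..<i}. pole_angle (\<omega> i) < pole_angle (\<omega> j))}"
    using True relay_eq_iff[OF N] by auto
  also have "\<dots> \<in> sets (leo_sats N)"
    using nearest strictly_before in_B by measurable
  finally show ?thesis .
next
  case False
  then have "{\<omega> \<in> space (leo_sats N). relay N \<omega> = i \<and> \<omega> i \<in> B} = {}"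
    using relay_nearest(1)[OF N] by fastforce
  then show ?thesis
    by (metis sets.empty_sets)
qed

lemma relay_update_eq_iff:
  assumes N: "N \<ge> 1" and i: "i < N" and x: "x \<in> extensional ({..<N} - {i})"
  shows "relay N (x(i := y)) = i \<longleftrightarrow> x \<in> PiE ({..<N} - {i})
    (\<lambda>j. if j < i then {z. pole_angle y < pole_angle z} else {z. pole_angle y \<le> pole_angle z})"
    (is "_ \<longleftrightarrow> x \<in> PiE _ ?S")
proof
  assume "relay N (x(i := y)) = i"
  then have le: "\<And>j. j < N \<Longrightarrow> pole_angle y \<le> pole_angle ((x(i := y)) j)"
    and less: "\<And>j. j < i \<Longrightarrow> pole_angle y < pole_angle ((x(i := y)) j)"
    unfolding relay_eq_iff[OF N] by auto
  have "x j \<in> ?S j" if "j \<in> {..<N} - {i}" for j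
    using that le[of j] less[of j] by auto
  then show "x \<in> PiE ({..<N} - {i}) ?S"
    using x by (simp add: PiE_iff)
next
  assume "x \<in> PiE ({..<N} - {i}) ?S"
  then have S: "\<And>j. j < N \<Longrightarrow> j \<noteq> i \<Longrightarrow> x j \<in> ?S j"
    by (simp add: PiE_iff)
  have "pole_angle y \<le> pole_angle ((x(i := y)) j)" if "j < N" for j
    using S[of j] that by (cases "j = i") (auto split: if_splits)
  moreover have "pole_angle y < pole_angle ((x(i := y)) j)" if "j < i" for j
    using S[of j] that i by auto
  ultimately show "relay N (x(i := y)) = i"
    unfolding relay_eq_iff[OF N] using i by simp
qed

lemma emeasure_relay_eq:
  assumes B: "B \<in> sets (borel \<Otimes>\<^sub>M borel)" and N: "N \<ge> 1" and i: "i < N"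
  shows "emeasure (leo_sats N) {\<omega> \<in> space (leo_sats N). relay N \<omega> = i \<and> \<omega> i \<in> B}
     = (\<integral>\<^sup>+y. indicator B y * ennreal (((1 + cos (pole_angle y)) / 2) ^ (N - 1)) \<partial>sphere_uniform)"
proof -
  define I where "I = {..<N} - {i}"
  define E where "E = {\<omega> \<in> space (leo_sats N). relay N \<omega> = i \<and> \<omega> i \<in> B}"
  define S where "S = (\<lambda>y j. if j < i then {z. pole_angle y < pole_angle z} else {z. pole_angle y \<le> pole_angle z})"
  have I: "{..<N} = insert i I" "i \<notin> I" "finite I" "card I = N - 1"
    using i unfolding I_def by auto
  have S_sets: "S y j \<in> sets sphere_uniform" for y j
    unfolding S_def using sets_pole_angle by auto
  have emeasure_S: "emeasure sphere_uniform (S y j) = ennreal ((1 + cos (pole_angle y)) / 2)" for y j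
    unfolding S_def using emeasure_pole_angle_ge emeasure_pole_angle_gt pole_angle_bounds by auto
  have E_sets: "E \<in> sets (PiM (insert i I) (\<lambda>_. sphere_uniform))"
    using sets_relay_eq[OF B N] unfolding E_def leo_sats_def I(1) .
  have slice: "indicator E (x(i := y)) = (indicator B y * indicator (PiE I (S y)) x :: ennreal)"
    if "x \<in> space (PiM I (\<lambda>_. sphere_uniform))" for x y
  proof -
    have "x(i := y) \<in> E \<longleftrightarrow> y \<in> B \<and> x \<in> PiE I (S y)"
      using that i relay_update_eq_iff[OF N i, of x y]
      by (auto simp: E_def I_def S_def leo_sats_def space_PiM PiE_iff extensional_def)
    then show ?thesis
      by (simp add: indicator_def)
  qed
  have "emeasure (leo_sats N) E = (\<integral>\<^sup>+\<omega>. indicator E \<omega> \<partial>PiM (insert i I) (\<lambda>_. sphere_uniform))"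
    using E_sets unfolding leo_sats_def I(1) by (rule nn_integral_indicator[symmetric])
  also have "\<dots> = (\<integral>\<^sup>+y. \<integral>\<^sup>+x. indicator E (x(i := y)) \<partial>PiM I (\<lambda>_. sphere_uniform) \<partial>sphere_uniform)"
    using I E_sets by (intro sphere_uniform_product.product_nn_integral_insert_rev) auto
  also have "\<dots> = (\<integral>\<^sup>+y. indicator B y * emeasure (PiM I (\<lambda>_. sphere_uniform)) (PiE I (S y)) \<partial>sphere_uniform)"
    using I S_sets
    by (intro nn_integral_cong) (simp add: slice nn_integral_cmult_indicator sets_PiM_I_finite cong: nn_integral_cong)
  also have "\<dots> = (\<integral>\<^sup>+y. indicator B y * ennreal (((1 + cos (pole_angle y)) / 2) ^ (N - 1)) \<partial>sphere_uniform)"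
  proof (intro nn_integral_cong)
    fix y
    have "0 \<le> (1 + cos (pole_angle y)) / 2"
      by (rule half_one_plus_cos_bounds)
    then show "indicator B y * emeasure (PiM I (\<lambda>_. sphere_uniform)) (PiE I (S y))
        = indicator B y * ennreal (((1 + cos (pole_angle y)) / 2) ^ (N - 1))"
      using I S_sets by (simp add: sphere_uniform_product.emeasure_PiM emeasure_S ennreal_power)
  qed
  finally show ?thesis
    unfolding E_def .
qed

lemma emeasure_relay_in:
  assumes B: "B \<in> sets (borel \<Otimes>\<^sub>M borel)" and N: "N \<ge> 1"
  shows "emeasure (leo_sats N) {\<omega> \<in> space (leo_sats N). \<omega> (relay N \<omega>) \<in> B}
     = of_nat N * (\<integral>\<^sup>+y. indicator B y * ennreal (((1 + cos (pole_angle y)) / 2) ^ (N - 1)) \<partial>sphere_uniform)"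
proof -
  define E where "E i = {\<omega> \<in> space (leo_sats N). relay N \<omega> = i \<and> \<omega> i \<in> B}" for i
  have "{\<omega> \<in> space (leo_sats N). \<omega> (relay N \<omega>) \<in> B} = (\<Union>i\<in>{..<N}. E i)"
    unfolding E_def using relay_nearest(1)[OF N] by auto
  then have "emeasure (leo_sats N) {\<omega> \<in> space (leo_sats N). \<omega> (relay N \<omega>) \<in> B}
      = (\<Sum>i<N. emeasure (leo_sats N) (E i))"
    using sets_relay_eq[OF B N]
    by (simp only:) (intro sum_emeasure[symmetric], auto simp: E_def disjoint_family_on_def)
  also have "\<dots> = of_nat N * (\<integral>\<^sup>+y. indicator B y * ennreal (((1 + cos (pole_angle y)) / 2) ^ (N - 1)) \<partial>sphere_uniform)"
    unfolding E_def by (simp add: emeasure_relay_eq[OF B N])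
  finally show ?thesis .
qed

section \<open>Integrating out the azimuth\<close>

definition availability_region :: "real \<Rightarrow> real \<Rightarrow> real \<Rightarrow> real \<Rightarrow> real \<Rightarrow> (real \<times> real) set" where
  "availability_region RL RG \<Theta> \<theta>max lmax =
     {y. pole_angle y \<le> \<theta>max \<and> sph_dist RL y RG (\<Theta>, 0) \<le> lmax}"

lemma sets_availability_region [measurable]:
  "availability_region RL RG \<Theta> \<theta>max lmax \<in> sets (borel \<Otimes>\<^sub>M borel)"
proof -
  have "{y \<in> space (borel \<Otimes>\<^sub>M borel). pole_angle y \<le> \<theta>max \<and> sph_dist RL y RG (\<Theta>, 0) \<le> lmax}
      \<in> sets (borel \<Otimes>\<^sub>M borel)"
    unfolding sph_dist_def by measurable
  then show ?thesis
    by (simp add: availability_region_def space_pair_measure)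
qed

lemma nn_integral_azimuth_availability:
  assumes "0 < RL" "RL < RG" "0 < \<Theta>" "\<Theta> < pi" "0 < lmax" "\<theta>max \<le> pi"
  shows "(\<integral>\<^sup>+\<phi>. indicator ({0..pi} \<times> {0..<2*pi}) (\<theta>, \<phi>) * ennreal (sin \<theta> / (4*pi)) *
           (indicator (availability_region RL RG \<Theta> \<theta>max lmax) (\<theta>, \<phi>) *
            ennreal (((1 + cos (pole_angle (\<theta>, \<phi>))) / 2) ^ (N - 1))) \<partial>lborel)
       = ennreal (sin \<theta> / 2 * ((1 + cos \<theta>) / 2) ^ (N - 1) * P_LG RL RG \<Theta> lmax \<theta>) * indicator {0..\<theta>max} \<theta>"
proof (cases "\<theta> \<in> {0..\<theta>max}")
  case False
  then have vanish: "indicator ({0..pi} \<times> {0..<2*pi}) (\<theta>, \<phi>) * ennreal (sin \<theta> / (4*pi)) *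
           (indicator (availability_region RL RG \<Theta> \<theta>max lmax) (\<theta>, \<phi>) *
            ennreal (((1 + cos (pole_angle (\<theta>, \<phi>))) / 2) ^ (N - 1))) = 0" for \<phi>
    using pole_angle_eq[of "(\<theta>, \<phi>)"] by (auto simp: indicator_def availability_region_def)
  show ?thesis
    by (simp only: vanish) (use False in simp)
next
  case True
  then have \<theta>: "0 \<le> \<theta>" "\<theta> \<le> pi" "\<theta> \<le> \<theta>max"
    using assms by auto
  define c where "c = sin \<theta> / (4*pi) * ((1 + cos \<theta>) / 2) ^ (N - 1)"
  have c_nonneg: "0 \<le> c"
    unfolding c_def using \<theta> sin_ge_zero half_one_plus_cos_bounds by auto
  define S where "S = {\<phi>\<in>{0..<2*pi}. sph_dist RL (\<theta>, \<phi>) RG (\<Theta>, 0) \<le> lmax}"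
  have "S = {\<phi> \<in> space borel. \<phi> \<in> {0..<2*pi} \<and> sph_dist RL (\<theta>, \<phi>) RG (\<Theta>, 0) \<le> lmax}"
    unfolding S_def by simp
  also have "\<dots> \<in> sets lborel"
    unfolding sph_dist_def by measurable
  finally have S_sets: "S \<in> sets lborel" .
  have "(\<integral>\<^sup>+\<phi>. indicator ({0..pi} \<times> {0..<2*pi}) (\<theta>, \<phi>) * ennreal (sin \<theta> / (4*pi)) *
           (indicator (availability_region RL RG \<Theta> \<theta>max lmax) (\<theta>, \<phi>) *
            ennreal (((1 + cos (pole_angle (\<theta>, \<phi>))) / 2) ^ (N - 1))) \<partial>lborel)
      = (\<integral>\<^sup>+\<phi>. ennreal c * indicator S \<phi> \<partial>lborel)"
  proof (rule nn_integral_cong)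
    fix \<phi>
    have "ennreal c = ennreal (sin \<theta> / (4*pi)) * ennreal (((1 + cos \<theta>) / 2) ^ (N - 1))"
      unfolding c_def using \<theta> sin_ge_zero half_one_plus_cos_bounds by (intro ennreal_mult) auto
    then show "indicator ({0..pi} \<times> {0..<2*pi}) (\<theta>, \<phi>) * ennreal (sin \<theta> / (4*pi)) *
           (indicator (availability_region RL RG \<Theta> \<theta>max lmax) (\<theta>, \<phi>) *
            ennreal (((1 + cos (pole_angle (\<theta>, \<phi>))) / 2) ^ (N - 1))) = ennreal c * indicator S \<phi>"
      using \<theta> pole_angle_eq[of "(\<theta>, \<phi>)"]
      by (auto simp: S_def availability_region_def indicator_def mult_ac)
  qed
  also have "\<dots> = ennreal c * emeasure lborel S"
    using S_sets by (rule nn_integral_cmult_indicator)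
  also have "\<dots> = ennreal (sin \<theta> / 2 * ((1 + cos \<theta>) / 2) ^ (N - 1) * P_LG RL RG \<Theta> lmax \<theta>)"
  proof (cases "\<theta> = 0 \<or> \<theta> = pi")
    case True
    then show ?thesis
      unfolding c_def by auto
  next
    case False
    then have "0 < \<theta>" "\<theta> < pi"
      using \<theta> by auto
    then have "ennreal c * emeasure lborel S = ennreal (c * (2*pi * P_LG RL RG \<Theta> lmax \<theta>))"
      using c_nonneg emeasure_azimuths_within_range[OF assms(1-5)] P_LG_bounds(1)[OF assms(1-5)]
      by (simp add: S_def ennreal_mult)
    then show ?thesis
      unfolding c_def by (simp add: field_simps)
  qed
  finally show ?thesis
    using True by simp
qed

lemma nn_integral_availability_region:
  assumes "0 < RL" "RL < RG" "0 < \<Theta>" "\<Theta> < pi" "0 < lmax" "\<theta>max \<le> pi"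
  shows "(\<integral>\<^sup>+y. indicator (availability_region RL RG \<Theta> \<theta>max lmax) y *
            ennreal (((1 + cos (pole_angle y)) / 2) ^ (N - 1)) \<partial>sphere_uniform)
       = (\<integral>\<^sup>+\<theta>. ennreal (sin \<theta> / 2 * ((1 + cos \<theta>) / 2) ^ (N - 1) * P_LG RL RG \<Theta> lmax \<theta>)
            * indicator {0..\<theta>max} \<theta> \<partial>lborel)"
proof -
  have "(\<integral>\<^sup>+y. indicator (availability_region RL RG \<Theta> \<theta>max lmax) y *
            ennreal (((1 + cos (pole_angle y)) / 2) ^ (N - 1)) \<partial>sphere_uniform)
      = (\<integral>\<^sup>+\<theta>. \<integral>\<^sup>+\<phi>. indicator ({0..pi} \<times> {0..<2*pi}) (\<theta>, \<phi>) * ennreal (sin \<theta> / (4*pi)) *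
           (indicator (availability_region RL RG \<Theta> \<theta>max lmax) (\<theta>, \<phi>) *
            ennreal (((1 + cos (pole_angle (\<theta>, \<phi>))) / 2) ^ (N - 1))) \<partial>lborel \<partial>lborel)"
    by (rule nn_integral_sphere_uniform) measurable
  also have "\<dots> = (\<integral>\<^sup>+\<theta>. ennreal (sin \<theta> / 2 * ((1 + cos \<theta>) / 2) ^ (N - 1) * P_LG RL RG \<Theta> lmax \<theta>)
            * indicator {0..\<theta>max} \<theta> \<partial>lborel)"
    by (intro nn_integral_cong nn_integral_azimuth_availability[OF assms])
  finally show ?thesis .
qed

section \<open>The polar-angle integral\<close>

lemma f_theta_IL_P_LG_bounds:
  assumes "0 < RL" "RL < RG" "0 < \<Theta>" "\<Theta> < pi" "0 < lmax" "0 \<le> \<theta>" "\<theta> \<le> pi"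
  shows "0 \<le> f_theta_IL N \<theta> * P_LG RL RG \<Theta> lmax \<theta>" "f_theta_IL N \<theta> * P_LG RL RG \<Theta> lmax \<theta> \<le> real N"
proof -
  consider "\<theta> = 0 \<or> \<theta> = pi" | "0 < \<theta>" "\<theta> < pi"
    using assms by fastforce
  then have "0 \<le> f_theta_IL N \<theta> * P_LG RL RG \<Theta> lmax \<theta> \<and> f_theta_IL N \<theta> * P_LG RL RG \<Theta> lmax \<theta> \<le> real N"
  proof cases
    case 1
    then show ?thesis
      unfolding f_theta_IL_def by auto
  next
    case 2
    have P: "0 \<le> P_LG RL RG \<Theta> lmax \<theta>" "P_LG RL RG \<Theta> lmax \<theta> \<le> 1"
      using P_LG_bounds[OF assms(1-5) 2] by auto
    have s: "0 \<le> sin \<theta>" "sin \<theta> \<le> 1"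
      using 2 by (auto intro: sin_ge_zero)
    have h: "0 \<le> ((1 + cos \<theta>) / 2) ^ (N - 1)" "((1 + cos \<theta>) / 2) ^ (N - 1) \<le> 1"
      using half_one_plus_cos_bounds[of \<theta>] by (auto intro!: power_le_one)
    have f_nonneg: "0 \<le> f_theta_IL N \<theta>"
      unfolding f_theta_IL_def using s h by simp
    have "f_theta_IL N \<theta> \<le> real N * 1 / 2 * 1"
      unfolding f_theta_IL_def using s h by (intro mult_mono divide_right_mono) auto
    then have "f_theta_IL N \<theta> * P_LG RL RG \<Theta> lmax \<theta> \<le> real N * 1"
      using f_nonneg P by (intro mult_mono) auto
    then show ?thesis
      using f_nonneg P by auto
  qed
  then show "0 \<le> f_theta_IL N \<theta> * P_LG RL RG \<Theta> lmax \<theta>" "f_theta_IL N \<theta> * P_LG RL RG \<Theta> lmax \<theta> \<le> real N"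
    by auto
qed

lemma borel_measurable_P_LG [measurable]:
  "P_LG RL RG \<Theta> lmax \<in> borel_measurable borel"
  unfolding P_LG_def Let_def by measurable

lemma borel_measurable_f_theta_IL_P_LG [measurable]:
  "(\<lambda>\<theta>. f_theta_IL N \<theta> * P_LG RL RG \<Theta> lmax \<theta>) \<in> borel_measurable borel"
  unfolding f_theta_IL_def by measurable

lemma f_theta_IL_P_LG_integrable:
  assumes "0 < RL" "RL < RG" "0 < \<Theta>" "\<Theta> < pi" "0 < lmax" "\<theta>max \<le> pi"
  shows "(\<lambda>\<theta>. f_theta_IL N \<theta> * P_LG RL RG \<Theta> lmax \<theta>) integrable_on {0..\<theta>max}"
proof -
  have "set_integrable lborel {0..\<theta>max} (\<lambda>\<theta>. f_theta_IL N \<theta> * P_LG RL RG \<Theta> lmax \<theta>)"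
    unfolding set_integrable_def using f_theta_IL_P_LG_bounds[OF assms(1-5), where N=N] assms(6)
    by (intro integrableI_bounded_set_indicator[where B="real N"]) (auto simp: emeasure_lborel_Icc_eq)
  then show ?thesis
    by (rule set_borel_integral_eq_integral(1))
qed

lemma nn_integral_f_theta_IL_P_LG:
  assumes "0 < RL" "RL < RG" "0 < \<Theta>" "\<Theta> < pi" "0 < lmax" "\<theta>max \<le> pi"
  shows "of_nat N * (\<integral>\<^sup>+\<theta>. ennreal (sin \<theta> / 2 * ((1 + cos \<theta>) / 2) ^ (N - 1) * P_LG RL RG \<Theta> lmax \<theta>)
            * indicator {0..\<theta>max} \<theta> \<partial>lborel)
    = ennreal (integral {0..\<theta>max} (\<lambda>\<theta>. f_theta_IL N \<theta> * P_LG RL RG \<Theta> lmax \<theta>))"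
proof -
  let ?F = "\<lambda>\<theta>. f_theta_IL N \<theta> * P_LG RL RG \<Theta> lmax \<theta>"
  have "of_nat N * ennreal (sin \<theta> / 2 * ((1 + cos \<theta>) / 2) ^ (N - 1) * P_LG RL RG \<Theta> lmax \<theta>)
      = ennreal (?F \<theta>)" for \<theta>
    by (subst ennreal_of_nat_eq_real_of_nat, subst ennreal_mult'[symmetric])
      (simp_all add: f_theta_IL_def mult_ac)
  then have "of_nat N * (\<integral>\<^sup>+\<theta>. ennreal (sin \<theta> / 2 * ((1 + cos \<theta>) / 2) ^ (N - 1) * P_LG RL RG \<Theta> lmax \<theta>)
            * indicator {0..\<theta>max} \<theta> \<partial>lborel)
      = (\<integral>\<^sup>+\<theta>. ennreal (?F \<theta>) * indicator {0..\<theta>max} \<theta> \<partial>lborel)"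
    by (subst nn_integral_cmult[symmetric]) (measurable, simp add: mult.assoc[symmetric])
  also have "\<dots> = ennreal (integral {0..\<theta>max} ?F)"
    using f_theta_IL_P_LG_bounds[OF assms(1-5), where N=N] assms(6)
    by (intro nn_integral_has_integral_lebesgue' integrable_integral f_theta_IL_P_LG_integrable[OF assms])
      auto
  finally show ?thesis .
qed

lemma integral_f_theta_IL_P_LG_nonneg:
  assumes "0 < RL" "RL < RG" "0 < \<Theta>" "\<Theta> < pi" "0 < lmax" "\<theta>max \<le> pi"
  shows "0 \<le> integral {0..\<theta>max} (\<lambda>\<theta>. f_theta_IL N \<theta> * P_LG RL RG \<Theta> lmax \<theta>)"
  using f_theta_IL_P_LG_bounds[OF assms(1-5), where N=N] assms(6)
  by (intro integral_nonneg f_theta_IL_P_LG_integrable[OF assms]) auto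

text \<open>\<open>(RL\<^sup>2 + RE\<^sup>2 - l\<^sup>2) / (2 RL RE)\<close> is the cosine of the central angle at which the
  device--satellite distance equals \<open>l\<close> (law of cosines); the range of \<open>l\<close> puts it in \<open>[0,1]\<close>.\<close>

lemma cosine_rule_quotient_bounds:
  fixes RE RL l :: real
  assumes "0 < RE" "RE < RL" "RL - RE \<le> l" "l \<le> sqrt (RL\<^sup>2 - RE\<^sup>2)"
  shows "0 \<le> (RL\<^sup>2 + RE\<^sup>2 - l\<^sup>2) / (2 * RL * RE)" "(RL\<^sup>2 + RE\<^sup>2 - l\<^sup>2) / (2 * RL * RE) \<le> 1"
proof -
  have "(RL - RE)\<^sup>2 \<le> l\<^sup>2"
    using assms by (intro power_mono) auto
  then show "(RL\<^sup>2 + RE\<^sup>2 - l\<^sup>2) / (2 * RL * RE) \<le> 1"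
    using assms by (simp add: divide_le_eq power2_eq_square algebra_simps)
  have "l\<^sup>2 \<le> (sqrt (RL\<^sup>2 - RE\<^sup>2))\<^sup>2"
    using assms by (intro power_mono) auto
  also have "\<dots> = RL\<^sup>2 - RE\<^sup>2"
    using assms by (intro real_sqrt_pow2) (simp add: power_strict_mono)
  finally have "0 \<le> RL\<^sup>2 + RE\<^sup>2 - l\<^sup>2"
    using zero_le_power2[of RE] by linarith
  then show "0 \<le> (RL\<^sup>2 + RE\<^sup>2 - l\<^sup>2) / (2 * RL * RE)"
    using assms by simp
qed

theorem theorem1:
  fixes RE RL RG \<Theta> lILmax lLGmax :: real and N :: nat
  assumes "0 < RE" "RE < RL" "RL < RG"
    and "N \<ge> 1"
    and "0 < \<Theta>" "\<Theta> < pi"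
    and "RL - RE \<le> lILmax" "lILmax \<le> sqrt (RL\<^sup>2 - RE\<^sup>2)"
    and "lLGmax > 0"
  shows "let \<theta>max = arccos ((RL\<^sup>2 + RE\<^sup>2 - lILmax\<^sup>2) / (2 * RL * RE));
             \<theta>IL = (\<lambda>\<omega>. central_angle (0,0) (\<omega> (relay N \<omega>)));
             lLG = (\<lambda>\<omega>. sph_dist RL (\<omega> (relay N \<omega>)) RG (\<Theta>, 0))
         in measure (leo_sats N) {\<omega> \<in> space (leo_sats N). \<theta>IL \<omega> \<le> \<theta>max \<and> lLG \<omega> \<le> lLGmax}
            = integral {0..\<theta>max} (\<lambda>\<theta>. f_theta_IL N \<theta> * P_LG RL RG \<Theta> lLGmax \<theta>)"
proof -
  define \<theta>max where "\<theta>max = arccos ((RL\<^sup>2 + RE\<^sup>2 - lILmax\<^sup>2) / (2 * RL * RE))"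
  define B where "B = availability_region RL RG \<Theta> \<theta>max lLGmax"
  have geometry: "0 < RL" "RL < RG" "0 < \<Theta>" "\<Theta> < pi" "0 < lLGmax" "\<theta>max \<le> pi"
    using assms cosine_rule_quotient_bounds[of RE RL lILmax] by (auto simp: \<theta>max_def arccos_ubound)
  have "{\<omega> \<in> space (leo_sats N). central_angle (0,0) (\<omega> (relay N \<omega>)) \<le> \<theta>max
          \<and> sph_dist RL (\<omega> (relay N \<omega>)) RG (\<Theta>, 0) \<le> lLGmax}
      = {\<omega> \<in> space (leo_sats N). \<omega> (relay N \<omega>) \<in> B}"
    by (simp add: B_def availability_region_def central_angle_pole)
  moreover have "emeasure (leo_sats N) {\<omega> \<in> space (leo_sats N). \<omega> (relay N \<omega>) \<in> B}
      = ennreal (integral {0..\<theta>max} (\<lambda>\<theta>. f_theta_IL N \<theta> * P_LG RL RG \<Theta> lLGmax \<theta>))"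
    unfolding B_def emeasure_relay_in[OF sets_availability_region \<open>N \<ge> 1\<close>]
      nn_integral_availability_region[OF geometry] nn_integral_f_theta_IL_P_LG[OF geometry] ..
  ultimately show ?thesis
    using integral_f_theta_IL_P_LG_nonneg[OF geometry, of N]
    by (simp add: Let_def \<theta>max_def measure_def)
qed

end
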